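(* Let $A$ be an algebra over a field $\Bbbk$. Then $A$ admits a normalized nearly Frobenius coproduct if and only if $A$ has Hochschild cohomological dimension $0$.
   Context: Algebras are associative and unital; tensor products over $\Bbbk$; $m$ denotes multiplication. A nearly Frobenius coproduct on $A$ is a $\Bbbk$-linear map $\Delta:A\to A\otimes A$ with $\Delta\circ m=(1\otimes m)\circ(\Delta\otimes 1)=(m\otimes 1)\circ(1\otimes\Delta)$; it is normalized if $m\circ\Delta=\operatorname{Id}_A$. $A$ has Hochschild cohomological dimension $0$ if the Hochschild cohomology $H^n(A,M)$ vanishes for all $n\ge 1$ and all $A$-bimodules $M$. *)

theory Defs
  imports Main "HOL.Vector_Spaces" "HOL-Library.Function_Algebras"
begin

text \<open>A (associative, unital) algebra over a field: the carrier is the whole type 'a,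
  with ring structure (zero algebra allowed) and a scalar multiplication sc
  making it a k-vector space such that multiplication is k-bilinear.\<close>

definition k_algebra :: "('k::field \<Rightarrow> 'a::{ring,monoid_mult} \<Rightarrow> 'a) \<Rightarrow> bool" where
  "k_algebra sc \<longleftrightarrow> vector_space sc \<and>
     (\<forall>c a b. sc c (a * b) = sc c a * b \<and> sc c (a * b) = a * sc c b)"

section \<open>The tensor product A \<otimes> A, as free vector space on A \<times> A modulo bilinearity\<close>

definition fin_supp :: "('b \<Rightarrow> 'k::zero) \<Rightarrow> bool" where
  "fin_supp f \<longleftrightarrow> finite {p. f p \<noteq> 0}"

definition tpure :: "'a \<Rightarrow> 'a \<Rightarrow> ('a \<times> 'a \<Rightarrow> 'k::{zero,one})" where
  "tpure x y = (\<lambda>p. if p = (x, y) then 1 else 0)"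

inductive_set tensor_rel :: "('k::field \<Rightarrow> 'a::{ring,monoid_mult} \<Rightarrow> 'a) \<Rightarrow> ('a \<times> 'a \<Rightarrow> 'k) set"
  for sc where
  zero: "(\<lambda>_. 0) \<in> tensor_rel sc"
| add: "f \<in> tensor_rel sc \<Longrightarrow> g \<in> tensor_rel sc \<Longrightarrow> (\<lambda>p. f p + g p) \<in> tensor_rel sc"
| smul: "f \<in> tensor_rel sc \<Longrightarrow> (\<lambda>p. c * f p) \<in> tensor_rel sc"
| addl: "(\<lambda>p. tpure (x + x') y p - tpure x y p - tpure x' y p) \<in> tensor_rel sc"
| addr: "(\<lambda>p. tpure x (y + y') p - tpure x y p - tpure x y' p) \<in> tensor_rel sc"
| smull: "(\<lambda>p. tpure (sc c x) y p - c * tpure x y p) \<in> tensor_rel sc"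
| smulr: "(\<lambda>p. tpure x (sc c y) p - c * tpure x y p) \<in> tensor_rel sc"

definition tensor_eq :: "('k::field \<Rightarrow> 'a::{ring,monoid_mult} \<Rightarrow> 'a) \<Rightarrow> ('a \<times> 'a \<Rightarrow> 'k) \<Rightarrow> ('a \<times> 'a \<Rightarrow> 'k) \<Rightarrow> bool" where
  "tensor_eq sc f g \<longleftrightarrow> (\<lambda>p. f p - g p) \<in> tensor_rel sc"

text \<open>Right action (x \<otimes> y) b = x \<otimes> y b and left action a (x \<otimes> y) = a x \<otimes> y on representatives.\<close>
definition trmul :: "('a \<times> 'a \<Rightarrow> 'k::comm_monoid_add) \<Rightarrow> 'a::times \<Rightarrow> ('a \<times> 'a \<Rightarrow> 'k)" where
  "trmul f b = (\<lambda>q. \<Sum>p\<in>{p. f p \<noteq> 0 \<and> (fst p, snd p * b) = q}. f p)"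

definition tlmul :: "'a::times \<Rightarrow> ('a \<times> 'a \<Rightarrow> 'k::comm_monoid_add) \<Rightarrow> ('a \<times> 'a \<Rightarrow> 'k)" where
  "tlmul a f = (\<lambda>q. \<Sum>p\<in>{p. f p \<noteq> 0 \<and> (a * fst p, snd p) = q}. f p)"

definition tmult :: "('k::field \<Rightarrow> 'a::{ring,monoid_mult} \<Rightarrow> 'a) \<Rightarrow> ('a \<times> 'a \<Rightarrow> 'k) \<Rightarrow> 'a" where
  "tmult sc f = (\<Sum>p\<in>{p. f p \<noteq> 0}. sc (f p) (fst p * snd p))"

text \<open>A k-linear map \<Delta> : A \<rightarrow> A \<otimes> A (given by representatives) with
  \<Delta>(ab) = \<Delta>(a) b = a \<Delta>(b), i.e. \<Delta> \<circ> m = (1 \<otimes> m)(\<Delta> \<otimes> 1) = (m \<otimes> 1)(1 \<otimes> \<Delta>)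
  evaluated on pure tensors a \<otimes> b.\<close>
definition nearly_frobenius :: "('k::field \<Rightarrow> 'a::{ring,monoid_mult} \<Rightarrow> 'a) \<Rightarrow> ('a \<Rightarrow> ('a \<times> 'a \<Rightarrow> 'k)) \<Rightarrow> bool" where
  "nearly_frobenius sc \<Delta> \<longleftrightarrow>
     (\<forall>a. fin_supp (\<Delta> a)) \<and>
     (\<forall>c a b. tensor_eq sc (\<Delta> (sc c a + b)) (\<lambda>p. c * \<Delta> a p + \<Delta> b p)) \<and>
     (\<forall>a b. tensor_eq sc (\<Delta> (a * b)) (trmul (\<Delta> a) b)) \<and>
     (\<forall>a b. tensor_eq sc (\<Delta> (a * b)) (tlmul a (\<Delta> b)))"

definition normalized :: "('k::field \<Rightarrow> 'a::{ring,monoid_mult} \<Rightarrow> 'a) \<Rightarrow> ('a \<Rightarrow> ('a \<times> 'a \<Rightarrow> 'k)) \<Rightarrow> bool" where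
  "normalized sc \<Delta> \<longleftrightarrow> (\<forall>a. tmult sc (\<Delta> a) = a)"

text \<open>An A-bimodule with carrier S (a subgroup of an abelian group type), left action L,
  right action R; k acts centrally (as usual for bimodules over a k-algebra).\<close>
definition bimodule :: "('k::field \<Rightarrow> 'a::{ring,monoid_mult} \<Rightarrow> 'a) \<Rightarrow> 'm::ab_group_add set
    \<Rightarrow> ('a \<Rightarrow> 'm \<Rightarrow> 'm) \<Rightarrow> ('m \<Rightarrow> 'a \<Rightarrow> 'm) \<Rightarrow> bool" where
  "bimodule sc S L R \<longleftrightarrow>
     0 \<in> S \<and> (\<forall>x\<in>S. \<forall>y\<in>S. x + y \<in> S) \<and> (\<forall>x\<in>S. - x \<in> S) \<and>
     (\<forall>a. \<forall>x\<in>S. L a x \<in> S \<and> R x a \<in> S) \<and>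
     (\<forall>a b. \<forall>x\<in>S. L (a * b) x = L a (L b x) \<and> R x (a * b) = R (R x a) b \<and>
                  L (a + b) x = L a x + L b x \<and> R x (a + b) = R x a + R x b \<and>
                  L a (R x b) = R (L a x) b) \<and>
     (\<forall>x\<in>S. L 1 x = x \<and> R x 1 = x) \<and>
     (\<forall>a. \<forall>x\<in>S. \<forall>y\<in>S. L a (x + y) = L a x + L a y \<and> R (x + y) a = R x a + R y a) \<and>
     (\<forall>c. \<forall>x\<in>S. L (sc c 1) x = R x (sc c 1))"

text \<open>Hochschild n-cochains: k-multilinear maps A^n \<rightarrow> M (equivalently k-linear maps
  A^{\<otimes>n} \<rightarrow> M), given as functions on lists of length n.\<close>
definition hoch_cochain :: "('k::field \<Rightarrow> 'a::{ring,monoid_mult} \<Rightarrow> 'a) \<Rightarrow> 'm::ab_group_add set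
    \<Rightarrow> ('a \<Rightarrow> 'm \<Rightarrow> 'm) \<Rightarrow> nat \<Rightarrow> ('a list \<Rightarrow> 'm) \<Rightarrow> bool" where
  "hoch_cochain sc S L n f \<longleftrightarrow>
     (\<forall>xs. length xs = n \<longrightarrow> f xs \<in> S) \<and>
     (\<forall>xs i c x y. length xs = n \<longrightarrow> i < n \<longrightarrow>
        f (xs[i := sc c x + y]) = L (sc c 1) (f (xs[i := x])) + f (xs[i := y]))"

definition alt_sign :: "nat \<Rightarrow> 'm::ab_group_add \<Rightarrow> 'm" where
  "alt_sign i x = (if even i then x else - x)"

definition hoch_d :: "('a::{ring,monoid_mult} \<Rightarrow> 'm::ab_group_add \<Rightarrow> 'm) \<Rightarrow> ('m \<Rightarrow> 'a \<Rightarrow> 'm)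
    \<Rightarrow> nat \<Rightarrow> ('a list \<Rightarrow> 'm) \<Rightarrow> 'a list \<Rightarrow> 'm" where
  "hoch_d L R n f xs =
     L (xs ! 0) (f (tl xs))
     + (\<Sum>i<n. alt_sign (Suc i) (f (take i xs @ [xs ! i * xs ! Suc i] @ drop (Suc (Suc i)) xs)))
     + alt_sign (Suc n) (R (f (butlast xs)) (last xs))"

definition hoch_vanish :: "('k::field \<Rightarrow> 'a::{ring,monoid_mult} \<Rightarrow> 'a) \<Rightarrow> 'm::ab_group_add set
    \<Rightarrow> ('a \<Rightarrow> 'm \<Rightarrow> 'm) \<Rightarrow> ('m \<Rightarrow> 'a \<Rightarrow> 'm) \<Rightarrow> nat \<Rightarrow> bool" where
  "hoch_vanish sc S L R n \<longleftrightarrow>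
     (\<forall>f. hoch_cochain sc S L n f \<and> (\<forall>xs. length xs = Suc n \<longrightarrow> hoch_d L R n f xs = 0) \<longrightarrow>
        (\<exists>g. hoch_cochain sc S L (n - 1) g \<and>
             (\<forall>xs. length xs = n \<longrightarrow> f xs = hoch_d L R (n - 1) g xs)))"

text \<open>Hochschild cohomological dimension 0, for all bimodules whose carrier lives in type 'm.\<close>
definition hoch_dim0 :: "('k::field \<Rightarrow> 'a::{ring,monoid_mult} \<Rightarrow> 'a) \<Rightarrow> 'm::ab_group_add itself \<Rightarrow> bool" where
  "hoch_dim0 sc (_::'m itself) \<longleftrightarrow>
     (\<forall>(S::'m set) L R. bimodule sc S L R \<longrightarrow> (\<forall>n\<ge>1. hoch_vanish sc S L R n))"

end

theory Submission
  imports Defs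
begin

text \<open>A normalized nearly Frobenius coproduct \<open>\<Delta>\<close> is the same thing as a separability
  idempotent \<open>e = \<Delta>(1) \<in> A \<otimes> A\<close>: \<open>a e = e a\<close> for all \<open>a\<close> and \<open>m(e) = 1\<close>; conversely
  \<open>\<Delta>(a) = a e\<close>. Given such an \<open>e = \<Sum> e\<^sub>i' \<otimes> e\<^sub>i''\<close>, every Hochschild \<open>n\<close>-cocycle \<open>f\<close>
  (\<open>n \<ge> 1\<close>) is the coboundary of the contraction \<open>g(x\<^sub>2, \<dots>) = \<Sum> e\<^sub>i' f(e\<^sub>i'', x\<^sub>2, \<dots>)\<close>.
  Conversely, \<open>a \<mapsto> a \<otimes> 1 - 1 \<otimes> a\<close> is a derivation into the bimodule \<open>\<Omega> = ker m\<close>; if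
  \<open>H\<^sup>1(A, \<Omega>) = 0\<close> it is inner, \<open>a \<otimes> 1 - 1 \<otimes> a = a u - u a\<close> with \<open>u \<in> \<Omega>\<close>, and
  \<open>e = 1 \<otimes> 1 - u\<close> is a separability idempotent.\<close>

section \<open>Finitely supported formal combinations\<close>

text \<open>\<open>F\<close> stands for \<open>\<Sum> F p \<cdot> [p]\<close>, and \<open>G p c\<close> is the image of \<open>c \<cdot> [p]\<close>.\<close>

definition lin_ext :: "('b \<Rightarrow> 'k \<Rightarrow> 'm::comm_monoid_add) \<Rightarrow> ('b \<Rightarrow> 'k::zero) \<Rightarrow> 'm" where
  "lin_ext G F = (\<Sum>p\<in>{p. F p \<noteq> 0}. G p (F p))"

definition coeff_additive :: "('b \<Rightarrow> 'k::ab_group_add \<Rightarrow> 'm::ab_group_add) \<Rightarrow> bool" where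
  "coeff_additive G \<longleftrightarrow> (\<forall>p c d. G p (c + d) = G p c + G p d)"

lemma coeff_additive_zero: "coeff_additive G \<Longrightarrow> G p 0 = 0"
  unfolding coeff_additive_def by (metis add_cancel_right_right)

lemma coeff_additive_diff: "coeff_additive G \<Longrightarrow> G p (c - d) = G p c - G p d"
  unfolding coeff_additive_def by (metis add_diff_cancel eq_diff_eq)

lemma coeff_additive_sum: "coeff_additive G \<Longrightarrow> G p (\<Sum>i\<in>I. f i) = (\<Sum>i\<in>I. G p (f i))"
  by (induction I rule: infinite_finite_induct) (auto simp: coeff_additive_zero coeff_additive_def)

lemma coeff_additive_indicator: "coeff_additive (\<lambda>p c. if h p = q then c else (0::'k::ab_group_add))"
  by (simp add: coeff_additive_def)

lemma fin_supp_zero [simp]: "fin_supp (\<lambda>_. 0)"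
  by (simp add: fin_supp_def)

lemma fin_supp_add: "fin_supp F \<Longrightarrow> fin_supp G \<Longrightarrow> fin_supp (\<lambda>p. F p + (G p :: 'k::monoid_add))"
  unfolding fin_supp_def by (rule finite_subset[of _ "{p. F p \<noteq> 0} \<union> {p. G p \<noteq> 0}"]) auto

lemma fin_supp_diff: "fin_supp F \<Longrightarrow> fin_supp G \<Longrightarrow> fin_supp (\<lambda>p. F p - (G p :: 'k::ab_group_add))"
  unfolding fin_supp_def by (rule finite_subset[of _ "{p. F p \<noteq> 0} \<union> {p. G p \<noteq> 0}"]) auto

lemma fin_supp_uminus: "fin_supp F \<Longrightarrow> fin_supp (\<lambda>p. - (F p :: 'k::ab_group_add))"
  by (simp add: fin_supp_def)

lemma fin_supp_scale: "fin_supp F \<Longrightarrow> fin_supp (\<lambda>p. c * (F p :: 'k::field))"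
  unfolding fin_supp_def by (rule finite_subset[of _ "{p. F p \<noteq> 0}"]) auto

lemma fin_supp_tpure: "fin_supp (tpure x y :: _ \<Rightarrow> 'k::{zero,one})"
  unfolding fin_supp_def tpure_def by (rule finite_subset[of _ "{(x, y)}"]) auto

lemma lin_ext_superset:
  assumes "finite T" "{p. F p \<noteq> 0} \<subseteq> T" "coeff_additive G"
  shows "lin_ext G F = (\<Sum>p\<in>T. G p (F p))"
  unfolding lin_ext_def using assms by (intro sum.mono_neutral_left) (auto simp: coeff_additive_zero)

lemma lin_ext_zero: "lin_ext G (\<lambda>_. 0) = 0"
  by (simp add: lin_ext_def)

lemma lin_ext_add:
  assumes "fin_supp F" "fin_supp F'" "coeff_additive G"
  shows "lin_ext G (\<lambda>p. F p + F' p) = lin_ext G F + lin_ext G F'"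
proof -
  let ?T = "{p. F p \<noteq> 0} \<union> {p. F' p \<noteq> 0}"
  have T: "finite ?T" using assms by (auto simp: fin_supp_def)
  have "lin_ext G (\<lambda>p. F p + F' p) = (\<Sum>p\<in>?T. G p (F p + F' p))"
    by (rule lin_ext_superset[OF T _ assms(3), of "\<lambda>p. F p + F' p"]) auto
  also have "\<dots> = (\<Sum>p\<in>?T. G p (F p)) + (\<Sum>p\<in>?T. G p (F' p))"
    using assms(3) by (simp add: coeff_additive_def sum.distrib)
  also have "\<dots> = lin_ext G F + lin_ext G F'"
    using lin_ext_superset[OF T _ assms(3), of F] lin_ext_superset[OF T _ assms(3), of F'] by auto
  finally show ?thesis .
qed

lemma lin_ext_diff:
  assumes "fin_supp F" "fin_supp F'" "coeff_additive G"
  shows "lin_ext G (\<lambda>p. F p - F' p) = lin_ext G F - lin_ext G F'"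
proof -
  let ?T = "{p. F p \<noteq> 0} \<union> {p. F' p \<noteq> 0}"
  have T: "finite ?T" using assms by (auto simp: fin_supp_def)
  have "lin_ext G (\<lambda>p. F p - F' p) = (\<Sum>p\<in>?T. G p (F p - F' p))"
    by (rule lin_ext_superset[OF T _ assms(3), of "\<lambda>p. F p - F' p"]) auto
  also have "\<dots> = (\<Sum>p\<in>?T. G p (F p)) - (\<Sum>p\<in>?T. G p (F' p))"
    using assms(3) by (simp add: coeff_additive_diff sum_subtractf)
  also have "\<dots> = lin_ext G F - lin_ext G F'"
    using lin_ext_superset[OF T _ assms(3), of F] lin_ext_superset[OF T _ assms(3), of F'] by auto
  finally show ?thesis .
qed

lemma lin_ext_uminus:
  assumes "fin_supp F" "coeff_additive G"
  shows "lin_ext G (\<lambda>p. - F p) = - lin_ext G F"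
  using lin_ext_diff[OF fin_supp_zero assms] by (simp add: lin_ext_zero)

lemma lin_ext_scale:
  assumes "\<And>p c d. G p (c * d) = c * G p d"
  shows "lin_ext G (\<lambda>p. c * F p) = c * lin_ext G (F :: _ \<Rightarrow> 'k::field)"
  by (cases "c = 0") (simp_all add: lin_ext_def assms sum_distrib_left)

lemma lin_ext_scaled_tpure:
  assumes "coeff_additive G"
  shows "lin_ext G (\<lambda>p. c * tpure x y p) = G (x, y) (c :: 'k::field)"
proof -
  have "lin_ext G (\<lambda>p. c * tpure x y p) = (\<Sum>p\<in>{(x, y)}. G p (c * tpure x y p))"
    by (rule lin_ext_superset) (auto simp: tpure_def assms)
  then show ?thesis by (simp add: tpure_def)
qed

lemma lin_ext_tpure: "coeff_additive G \<Longrightarrow> lin_ext G (tpure x y) = G (x, y) (1 :: 'k::field)"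
  using lin_ext_scaled_tpure[of G 1 x y] by simp

lemma fin_supp_tensor_rel: "f \<in> tensor_rel sc \<Longrightarrow> fin_supp f"
  by (induction rule: tensor_rel.induct)
     (auto intro!: fin_supp_add fin_supp_scale fin_supp_diff fin_supp_tpure)

definition pushforward :: "('b \<Rightarrow> 'c) \<Rightarrow> ('b \<Rightarrow> 'k::comm_monoid_add) \<Rightarrow> 'c \<Rightarrow> 'k" where
  "pushforward h F = (\<lambda>q. \<Sum>p\<in>{p. F p \<noteq> 0 \<and> h p = q}. F p)"

lemma pushforward_eq_lin_ext:
  fixes F :: "'b \<Rightarrow> 'k::field"
  assumes "fin_supp F"
  shows "pushforward h F q = lin_ext (\<lambda>p c. if h p = q then c else 0) F"
proof -
  have "{p. F p \<noteq> 0 \<and> h p = q} = {p \<in> {p. F p \<noteq> 0}. h p = q}" by auto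
  with assms show ?thesis
    unfolding pushforward_def lin_ext_def fin_supp_def by (simp add: sum.inter_filter[symmetric])
qed

lemma supp_pushforward: "{q. pushforward h F q \<noteq> 0} \<subseteq> h ` {p. F p \<noteq> 0}"
proof
  fix q assume "q \<in> {q. pushforward h F q \<noteq> 0}"
  then have "{p. F p \<noteq> 0 \<and> h p = q} \<noteq> {}"
    by (force simp: pushforward_def)
  then show "q \<in> h ` {p. F p \<noteq> 0}" by auto
qed

lemma fin_supp_pushforward: "fin_supp F \<Longrightarrow> fin_supp (pushforward h F)"
  unfolding fin_supp_def by (rule finite_subset[OF supp_pushforward finite_imageI])

lemma lin_ext_pushforward:
  fixes F :: "'b \<Rightarrow> 'k::field"
  assumes F: "fin_supp F" and G: "coeff_additive G"
  shows "lin_ext G (pushforward h F) = (\<Sum>p\<in>{p. F p \<noteq> 0}. G (h p) (F p))"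
proof -
  let ?S = "{p. F p \<noteq> 0}"
  have S: "finite ?S" using F by (simp add: fin_supp_def)
  have "lin_ext G (pushforward h F) = (\<Sum>q\<in>h ` ?S. G q (pushforward h F q))"
    by (rule lin_ext_superset[OF finite_imageI[OF S] supp_pushforward G])
  also have "\<dots> = (\<Sum>q\<in>h ` ?S. \<Sum>p\<in>{p \<in> ?S. h p = q}. G (h p) (F p))"
  proof (rule sum.cong[OF refl])
    fix q
    have "pushforward h F q = (\<Sum>p\<in>{p \<in> ?S. h p = q}. F p)"
      unfolding pushforward_def by (rule sum.cong) auto
    then show "G q (pushforward h F q) = (\<Sum>p\<in>{p \<in> ?S. h p = q}. G (h p) (F p))"
      by (simp add: coeff_additive_sum[OF G])
  qed
  also have "\<dots> = (\<Sum>p\<in>?S. G (h p) (F p))"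
    by (rule sum.image_gen[OF S, symmetric])
  finally show ?thesis .
qed

lemma pushforward_add:
  fixes F :: "'b \<Rightarrow> 'k::field"
  assumes "fin_supp F" "fin_supp F'"
  shows "pushforward h (\<lambda>p. F p + F' p) = (\<lambda>q. pushforward h F q + pushforward h F' q)"
  using assms
  by (simp add: fun_eq_iff pushforward_eq_lin_ext fin_supp_add lin_ext_add coeff_additive_indicator)

lemma pushforward_diff:
  fixes F :: "'b \<Rightarrow> 'k::field"
  assumes "fin_supp F" "fin_supp F'"
  shows "pushforward h (\<lambda>p. F p - F' p) = (\<lambda>q. pushforward h F q - pushforward h F' q)"
  using assms
  by (simp add: fun_eq_iff pushforward_eq_lin_ext fin_supp_diff lin_ext_diff coeff_additive_indicator)

lemma pushforward_scale: "pushforward h (\<lambda>p. c * F p) = (\<lambda>q. c * pushforward h F q :: 'k::field)"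
  by (cases "c = 0") (simp_all add: pushforward_def sum_distrib_left)

lemma pushforward_zero: "pushforward h (\<lambda>_. 0) = (\<lambda>_. 0)"
  by (simp add: pushforward_def)

lemma pushforward_comp:
  fixes F :: "'b \<Rightarrow> 'k::field"
  assumes F: "fin_supp F"
  shows "pushforward h' (pushforward h F) = pushforward (h' \<circ> h) F"
proof
  fix q
  have "pushforward h' (pushforward h F) q = lin_ext (\<lambda>p c. if h' p = q then c else 0) (pushforward h F)"
    by (rule pushforward_eq_lin_ext[OF fin_supp_pushforward[OF F]])
  also have "\<dots> = (\<Sum>p\<in>{p. F p \<noteq> 0}. (if h' (h p) = q then F p else 0))"
    by (rule lin_ext_pushforward[OF F coeff_additive_indicator])
  also have "\<dots> = pushforward (h' \<circ> h) F q"
    by (simp add: pushforward_eq_lin_ext[OF F] lin_ext_def)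
  finally show "pushforward h' (pushforward h F) q = pushforward (h' \<circ> h) F q" .
qed

lemma pushforward_id: "pushforward (\<lambda>p. p) F = F"
proof
  fix q
  have "{p. F p \<noteq> 0 \<and> p = q} = (if F q \<noteq> 0 then {q} else {})" by auto
  then show "pushforward (\<lambda>p. p) F q = F q" by (simp add: pushforward_def)
qed

lemma pushforward_scaled_tpure:
  "pushforward h (\<lambda>p. c * tpure x y p) = (\<lambda>q. c * tpure (fst (h (x, y))) (snd (h (x, y))) q :: 'k::field)"
proof
  fix q
  have "pushforward h (\<lambda>p. c * tpure x y p) q = (if h (x, y) = q then c else 0)"
    by (simp add: pushforward_eq_lin_ext fin_supp_scale fin_supp_tpure lin_ext_scaled_tpure
        coeff_additive_indicator)
  then show "pushforward h (\<lambda>p. c * tpure x y p) q = c * tpure (fst (h (x, y))) (snd (h (x, y))) q"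
    by (auto simp: tpure_def)
qed

lemma pushforward_tpure:
  "pushforward h (tpure x y) = (tpure (fst (h (x, y))) (snd (h (x, y))) :: _ \<Rightarrow> 'k::field)"
  using pushforward_scaled_tpure[of h 1 x y] by simp

lemma pushforward_expand:
  assumes "fin_supp F"
  shows "pushforward h F = (\<lambda>q. \<Sum>p\<in>{p. F p \<noteq> 0}. F p * tpure (fst (h p)) (snd (h p)) q :: 'k::field)"
  using assms
  by (auto simp: fun_eq_iff pushforward_eq_lin_ext lin_ext_def tpure_def intro: sum.cong)

lemma fin_supp_expand:
  assumes "fin_supp F"
  shows "F = (\<lambda>q. \<Sum>p\<in>{p. F p \<noteq> 0}. F p * tpure (fst p) (snd p) q :: 'k::field)"
  using pushforward_expand[OF assms, of "\<lambda>p. p"] by (simp add: pushforward_id)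

section \<open>The tensor product \<open>A \<otimes> A\<close>\<close>

context
  fixes sc :: "'k::field \<Rightarrow> 'a::{ring,monoid_mult} \<Rightarrow> 'a"
begin

lemma tensor_rel_uminus: "f \<in> tensor_rel sc \<Longrightarrow> (\<lambda>p. - f p) \<in> tensor_rel sc"
  using tensor_rel.smul[of f sc "-1"] by simp

lemma tensor_rel_sum:
  "finite I \<Longrightarrow> (\<And>i. i \<in> I \<Longrightarrow> h i \<in> tensor_rel sc) \<Longrightarrow> (\<lambda>p. \<Sum>i\<in>I. h i p) \<in> tensor_rel sc"
  by (induction I rule: finite_induct) (auto intro: tensor_rel.zero tensor_rel.add)

lemma tensor_eq_refl: "tensor_eq sc F F"
  unfolding tensor_eq_def using tensor_rel.zero[of sc] by simp

lemma tensor_eq_sym: "tensor_eq sc F F' \<Longrightarrow> tensor_eq sc F' F"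
  unfolding tensor_eq_def using tensor_rel_uminus[of "\<lambda>p. F p - F' p"] by simp

lemma tensor_eq_trans [trans]: "tensor_eq sc F F' \<Longrightarrow> tensor_eq sc F' F'' \<Longrightarrow> tensor_eq sc F F''"
  unfolding tensor_eq_def using tensor_rel.add[of "\<lambda>p. F p - F' p" sc "\<lambda>p. F' p - F'' p"] by simp

lemma tensor_eq_add:
  "tensor_eq sc F F' \<Longrightarrow> tensor_eq sc G G' \<Longrightarrow> tensor_eq sc (\<lambda>p. F p + G p) (\<lambda>p. F' p + G' p)"
  unfolding tensor_eq_def using tensor_rel.add[of "\<lambda>p. F p - F' p" sc "\<lambda>p. G p - G' p"]
  by (simp add: algebra_simps)

lemma tensor_eq_scale: "tensor_eq sc F F' \<Longrightarrow> tensor_eq sc (\<lambda>p. c * F p) (\<lambda>p. c * F' p)"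
  unfolding tensor_eq_def using tensor_rel.smul[of "\<lambda>p. F p - F' p" sc c]
  by (simp add: algebra_simps)

lemma tensor_eq_sum:
  "finite I \<Longrightarrow> (\<And>i. i \<in> I \<Longrightarrow> tensor_eq sc (F i) (F' i)) \<Longrightarrow>
    tensor_eq sc (\<lambda>p. \<Sum>i\<in>I. F i p) (\<lambda>p. \<Sum>i\<in>I. F' i p)"
  unfolding tensor_eq_def using tensor_rel_sum[of I "\<lambda>i p. F i p - F' i p"]
  by (simp add: sum_subtractf)

lemma tensor_eq_lincomb:
  assumes "finite S" "\<And>x y. tensor_eq sc (P x y) (Q x y)"
  shows "tensor_eq sc (\<lambda>q. \<Sum>p\<in>S. F p * P (fst p) (snd p) q) (\<lambda>q. \<Sum>p\<in>S. F p * Q (fst p) (snd p) q)"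
  using assms by (intro tensor_eq_sum tensor_eq_scale) auto

lemma tensor_eq_tpure_add_left: "tensor_eq sc (tpure (x + x') y) (\<lambda>q. tpure x y q + tpure x' y q)"
  using tensor_rel.addl[of x x' y sc] unfolding tensor_eq_def by (simp add: diff_diff_eq)

lemma tensor_eq_tpure_add_right: "tensor_eq sc (tpure x (y + y')) (\<lambda>q. tpure x y q + tpure x y' q)"
  using tensor_rel.addr[of x y y' sc] unfolding tensor_eq_def by (simp add: diff_diff_eq)

lemma tensor_eq_tpure_scale_left: "tensor_eq sc (tpure (sc c x) y) (\<lambda>q. c * tpure x y q)"
  using tensor_rel.smull[of sc c x y] unfolding tensor_eq_def by simp

lemma tensor_eq_tpure_scale_right: "tensor_eq sc (tpure x (sc c y)) (\<lambda>q. c * tpure x y q)"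
  using tensor_rel.smulr[of x sc c y] unfolding tensor_eq_def by simp

lemma tensor_eq_tpure_zero_left: "tensor_eq sc (tpure 0 y) (\<lambda>_. 0)"
  using tensor_rel_uminus[OF tensor_rel.addl[of 0 0 y sc]] unfolding tensor_eq_def by simp

lemma tensor_eq_tpure_zero_right: "tensor_eq sc (tpure x 0) (\<lambda>_. 0)"
  using tensor_rel_uminus[OF tensor_rel.addr[of x 0 0 sc]] unfolding tensor_eq_def by simp

lemma tensor_eq_tpure_sum_left:
  "finite I \<Longrightarrow> tensor_eq sc (tpure (\<Sum>b\<in>I. sc (c b) b) y) (\<lambda>q. \<Sum>b\<in>I. c b * tpure b y q)"
proof (induction I rule: finite_induct)
  case empty
  then show ?case by (simp add: tensor_eq_tpure_zero_left)
next
  case (insert x I)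
  then show ?case
    using tensor_eq_trans[OF tensor_eq_tpure_add_left tensor_eq_add[OF tensor_eq_tpure_scale_left insert.IH]]
    by simp
qed

lemma tensor_eq_tpure_sum_right:
  "finite I \<Longrightarrow> tensor_eq sc (tpure x (\<Sum>b\<in>I. sc (c b) b)) (\<lambda>q. \<Sum>b\<in>I. c b * tpure x b q)"
proof (induction I rule: finite_induct)
  case empty
  then show ?case by (simp add: tensor_eq_tpure_zero_right)
next
  case (insert z I)
  then show ?case
    using tensor_eq_trans[OF tensor_eq_tpure_add_right tensor_eq_add[OF tensor_eq_tpure_scale_right insert.IH]]
    by simp
qed

lemma tensor_rel_pushforward_tensor_map:
  assumes \<phi>: "\<And>x y. \<phi> (x + y) = \<phi> x + \<phi> y" "\<And>c x. \<phi> (sc c x) = sc c (\<phi> x)"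
    and \<psi>: "\<And>x y. \<psi> (x + y) = \<psi> x + \<psi> y" "\<And>c x. \<psi> (sc c x) = sc c (\<psi> x)"
    and f: "f \<in> tensor_rel sc"
  shows "pushforward (\<lambda>p. (\<phi> (fst p), \<psi> (snd p))) f \<in> tensor_rel sc"
  using f
proof (induction rule: tensor_rel.induct)
  case zero
  then show ?case by (simp add: pushforward_zero tensor_rel.zero)
next
  case (add f g)
  then show ?case by (simp add: pushforward_add fin_supp_tensor_rel tensor_rel.add)
next
  case (smul f c)
  then show ?case by (simp add: pushforward_scale tensor_rel.smul)
qed (simp_all add: pushforward_diff pushforward_tpure pushforward_scaled_tpure fin_supp_diff
      fin_supp_scale fin_supp_tpure \<phi> \<psi> tensor_rel.intros)

lemma tensor_eq_pushforward_tensor_map: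
  assumes "\<And>x y. \<phi> (x + y) = \<phi> x + \<phi> y" "\<And>c x. \<phi> (sc c x) = sc c (\<phi> x)"
    and "\<And>x y. \<psi> (x + y) = \<psi> x + \<psi> y" "\<And>c x. \<psi> (sc c x) = sc c (\<psi> x)"
    and "tensor_eq sc F F'" "fin_supp F" "fin_supp F'"
  shows "tensor_eq sc (pushforward (\<lambda>p. (\<phi> (fst p), \<psi> (snd p))) F)
                      (pushforward (\<lambda>p. (\<phi> (fst p), \<psi> (snd p))) F')"
  using tensor_rel_pushforward_tensor_map[OF assms(1-4)] assms(5-7)
  by (simp add: tensor_eq_def pushforward_diff[symmetric])

end

definition tensor_compatible ::
    "('k::field \<Rightarrow> 'a::{ring,monoid_mult} \<Rightarrow> 'a) \<Rightarrow> ('a \<times> 'a \<Rightarrow> 'k \<Rightarrow> 'm::ab_group_add) \<Rightarrow> bool" where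
  "tensor_compatible sc G \<longleftrightarrow> coeff_additive G \<and>
     (\<forall>x x' y c. G (x + x', y) c = G (x, y) c + G (x', y) c) \<and>
     (\<forall>x y y' c. G (x, y + y') c = G (x, y) c + G (x, y') c) \<and>
     (\<forall>x y c d. G (sc d x, y) c = G (x, y) (c * d) \<and> G (x, sc d y) c = G (x, y) (c * d))"

lemma tensor_compatibleI:
  assumes "coeff_additive G"
    and "\<And>x x' y c. G (x + x', y) c = G (x, y) c + G (x', y) c"
    and "\<And>x y y' c. G (x, y + y') c = G (x, y) c + G (x, y') c"
    and "\<And>x y c d. G (sc d x, y) c = G (x, y) (c * d)"
    and "\<And>x y c d. G (x, sc d y) c = G (x, y) (c * d)"
  shows "tensor_compatible sc G"
  using assms by (simp add: tensor_compatible_def)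

text \<open>The extra scalar \<open>c\<close> makes the induction go through the \<open>smul\<close> rule.\<close>

lemma lin_ext_tensor_rel:
  assumes G: "tensor_compatible sc G" and f: "f \<in> tensor_rel sc"
  shows "lin_ext G (\<lambda>p. c * f p) = 0"
  using f
proof (induction arbitrary: c rule: tensor_rel.induct)
  case zero
  then show ?case by (simp add: lin_ext_def)
next
  case (add f g)
  have "lin_ext G (\<lambda>p. c * (f p + g p)) = lin_ext G (\<lambda>p. c * f p) + lin_ext G (\<lambda>p. c * g p)"
    unfolding distrib_left using add.hyps G
    by (intro lin_ext_add fin_supp_scale fin_supp_tensor_rel) (simp_all add: tensor_compatible_def)
  with add.IH show ?case by simp
next
  case (smul f d)
  then show ?case using smul.IH[of "c * d"] by (simp add: mult.assoc)
qed (use G in \<open>simp_all add: right_diff_distrib lin_ext_diff fin_supp_diff fin_supp_scale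
      fin_supp_tpure mult.assoc[symmetric] lin_ext_scaled_tpure tensor_compatible_def\<close>)

lemma lin_ext_tensor_eq:
  assumes G: "tensor_compatible sc G"
    and eq: "tensor_eq sc F F'" and F: "fin_supp F" "fin_supp F'"
  shows "lin_ext G F = lin_ext G F'"
proof -
  have "lin_ext G (\<lambda>p. 1 * (F p - F' p)) = 0"
    using eq by (intro lin_ext_tensor_rel[OF G]) (simp add: tensor_eq_def)
  moreover have "coeff_additive G"
    using G by (simp add: tensor_compatible_def)
  ultimately show ?thesis
    using lin_ext_diff[OF F] by force
qed

lemma tlmul_eq_pushforward: "tlmul a F = pushforward (\<lambda>p. (a * fst p, snd p)) F"
  by (simp add: tlmul_def pushforward_def)

lemma trmul_eq_pushforward: "trmul F b = pushforward (\<lambda>p. (fst p, snd p * b)) F"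
  by (simp add: trmul_def pushforward_def)

lemma fin_supp_tlmul: "fin_supp F \<Longrightarrow> fin_supp (tlmul a F)"
  unfolding tlmul_eq_pushforward by (rule fin_supp_pushforward)

lemma fin_supp_trmul: "fin_supp F \<Longrightarrow> fin_supp (trmul F b)"
  unfolding trmul_eq_pushforward by (rule fin_supp_pushforward)

lemma tlmul_tlmul:
  "fin_supp F \<Longrightarrow> tlmul a (tlmul b F) = tlmul (a * b :: 'a::semigroup_mult) (F :: _ \<Rightarrow> 'k::field)"
  unfolding tlmul_eq_pushforward
  by (simp add: pushforward_comp comp_def mult.assoc)

lemma trmul_trmul: "fin_supp F \<Longrightarrow> trmul (trmul F a) b = (trmul F (a * b :: 'a::semigroup_mult) :: _ \<Rightarrow> 'k::field)"
  unfolding trmul_eq_pushforward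
  by (simp add: pushforward_comp comp_def mult.assoc)

lemma tlmul_trmul: "fin_supp F \<Longrightarrow> tlmul a (trmul F b) = (trmul (tlmul a F) (b :: 'a::times) :: _ \<Rightarrow> 'k::field)"
  unfolding trmul_eq_pushforward tlmul_eq_pushforward
  by (simp add: pushforward_comp comp_def)

lemma tlmul_one: "tlmul (1 :: 'a::monoid_mult) F = (F :: _ \<Rightarrow> 'k::field)"
  unfolding tlmul_eq_pushforward by (simp add: pushforward_id)

lemma trmul_one: "trmul F (1 :: 'a::monoid_mult) = (F :: _ \<Rightarrow> 'k::field)"
  unfolding trmul_eq_pushforward by (simp add: pushforward_id)

lemma tlmul_tpure: "tlmul a (tpure x y) = (tpure (a * x) y :: _ \<Rightarrow> 'k::field)"
  unfolding tlmul_eq_pushforward by (simp add: pushforward_tpure)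

lemma trmul_tpure: "trmul (tpure x y) b = (tpure x (y * b) :: _ \<Rightarrow> 'k::field)"
  unfolding trmul_eq_pushforward by (simp add: pushforward_tpure)

lemma tlmul_diff:
  "fin_supp F \<Longrightarrow> fin_supp F' \<Longrightarrow> tlmul a (\<lambda>p. F p - F' p) = (\<lambda>q. tlmul a F q - tlmul a F' q :: 'k::field)"
  unfolding tlmul_eq_pushforward by (rule pushforward_diff)

lemma trmul_diff:
  "fin_supp F \<Longrightarrow> fin_supp F' \<Longrightarrow> trmul (\<lambda>p. F p - F' p) b = (\<lambda>q. trmul F b q - trmul F' b q :: 'k::field)"
  unfolding trmul_eq_pushforward by (rule pushforward_diff)

lemma tlmul_expand:
  "fin_supp F \<Longrightarrow> tlmul a F = (\<lambda>q. \<Sum>p\<in>{p. F p \<noteq> 0}. F p * tpure (a * fst p) (snd p) q :: 'k::field)"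
  unfolding tlmul_eq_pushforward by (simp add: pushforward_expand)

lemma trmul_expand:
  "fin_supp F \<Longrightarrow> trmul F b = (\<lambda>q. \<Sum>p\<in>{p. F p \<noteq> 0}. F p * tpure (fst p) (snd p * b) q :: 'k::field)"
  unfolding trmul_eq_pushforward by (simp add: pushforward_expand)

locale field_algebra =
  fixes sc :: "'k::field \<Rightarrow> 'a::{ring,monoid_mult} \<Rightarrow> 'a"
  assumes k_algebra: "k_algebra sc"

sublocale field_algebra \<subseteq> vector_space sc
  using k_algebra by (simp add: k_algebra_def)

context field_algebra
begin

lemma scale_mult_left: "sc c (a * b) = sc c a * b"
  using k_algebra unfolding k_algebra_def by blast

lemma scale_mult_right: "sc c (a * b) = a * sc c b"
  using k_algebra unfolding k_algebra_def by blast

lemma scale_eq_mult_left: "sc c a = sc c 1 * a"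
  using scale_mult_left[of c 1 a] by simp

lemma scale_eq_mult_right: "sc c a = a * sc c 1"
  using scale_mult_right[of c a 1] by simp

lemma tensor_eq_tlmul:
  "tensor_eq sc F F' \<Longrightarrow> fin_supp F \<Longrightarrow> fin_supp F' \<Longrightarrow> tensor_eq sc (tlmul a F) (tlmul a F')"
  unfolding tlmul_eq_pushforward
  by (rule tensor_eq_pushforward_tensor_map) (simp_all add: distrib_left scale_mult_right)

lemma tensor_eq_trmul:
  "tensor_eq sc F F' \<Longrightarrow> fin_supp F \<Longrightarrow> fin_supp F' \<Longrightarrow> tensor_eq sc (trmul F b) (trmul F' b)"
  unfolding trmul_eq_pushforward
  by (rule tensor_eq_pushforward_tensor_map) (simp_all add: distrib_right scale_mult_left)

lemma tensor_eq_tlmul_add: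
  assumes F: "fin_supp F"
  shows "tensor_eq sc (tlmul (a + b) F) (\<lambda>q. tlmul a F q + tlmul b F q)"
proof -
  have "tensor_eq sc (\<lambda>q. \<Sum>p\<in>{p. F p \<noteq> 0}. F p * tpure ((a + b) * fst p) (snd p) q)
     (\<lambda>q. \<Sum>p\<in>{p. F p \<noteq> 0}. F p * (tpure (a * fst p) (snd p) q + tpure (b * fst p) (snd p) q))"
    by (rule tensor_eq_lincomb[where P="\<lambda>x. tpure ((a + b) * x)"])
       (use F in \<open>auto simp: fin_supp_def distrib_right tensor_eq_tpure_add_left\<close>)
  then show ?thesis
    using F by (simp add: tlmul_expand distrib_left sum.distrib)
qed

lemma tensor_eq_trmul_add:
  assumes F: "fin_supp F"
  shows "tensor_eq sc (trmul F (a + b)) (\<lambda>q. trmul F a q + trmul F b q)"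
proof -
  have "tensor_eq sc (\<lambda>q. \<Sum>p\<in>{p. F p \<noteq> 0}. F p * tpure (fst p) (snd p * (a + b)) q)
     (\<lambda>q. \<Sum>p\<in>{p. F p \<noteq> 0}. F p * (tpure (fst p) (snd p * a) q + tpure (fst p) (snd p * b) q))"
    by (rule tensor_eq_lincomb[where P="\<lambda>x y. tpure x (y * (a + b))"])
       (use F in \<open>auto simp: fin_supp_def distrib_left tensor_eq_tpure_add_right\<close>)
  then show ?thesis
    using F by (simp add: trmul_expand distrib_left sum.distrib)
qed

lemma tensor_eq_tlmul_scalar:
  assumes F: "fin_supp F"
  shows "tensor_eq sc (tlmul (sc c 1) F) (\<lambda>q. c * F q)"
proof -
  have "tensor_eq sc (\<lambda>q. \<Sum>p\<in>{p. F p \<noteq> 0}. F p * tpure (sc c 1 * fst p) (snd p) q)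
     (\<lambda>q. \<Sum>p\<in>{p. F p \<noteq> 0}. F p * (c * tpure (fst p) (snd p) q))"
    by (rule tensor_eq_lincomb[where P="\<lambda>x. tpure (sc c 1 * x)"])
       (use F in \<open>auto simp: fin_supp_def scale_eq_mult_left[symmetric] tensor_eq_tpure_scale_left\<close>)
  moreover have "(\<lambda>q. c * F q) = (\<lambda>q. \<Sum>p\<in>{p. F p \<noteq> 0}. F p * (c * tpure (fst p) (snd p) q))"
    by (subst fin_supp_expand[OF F]) (simp add: sum_distrib_left algebra_simps)
  ultimately show ?thesis
    using F by (simp add: tlmul_expand)
qed

lemma tensor_eq_trmul_scalar:
  assumes F: "fin_supp F"
  shows "tensor_eq sc (trmul F (sc c 1)) (\<lambda>q. c * F q)"
proof -
  have "tensor_eq sc (\<lambda>q. \<Sum>p\<in>{p. F p \<noteq> 0}. F p * tpure (fst p) (snd p * sc c 1) q)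
     (\<lambda>q. \<Sum>p\<in>{p. F p \<noteq> 0}. F p * (c * tpure (fst p) (snd p) q))"
    by (rule tensor_eq_lincomb[where P="\<lambda>x y. tpure x (y * sc c 1)"])
       (use F in \<open>auto simp: fin_supp_def scale_eq_mult_right[symmetric] tensor_eq_tpure_scale_right\<close>)
  moreover have "(\<lambda>q. c * F q) = (\<lambda>q. \<Sum>p\<in>{p. F p \<noteq> 0}. F p * (c * tpure (fst p) (snd p) q))"
    by (subst fin_supp_expand[OF F]) (simp add: sum_distrib_left algebra_simps)
  ultimately show ?thesis
    using F by (simp add: trmul_expand)
qed

lemma tmult_eq_lin_ext: "tmult sc F = lin_ext (\<lambda>p c. sc c (fst p * snd p)) F"
  by (simp add: tmult_def lin_ext_def)

lemma coeff_additive_mult: "coeff_additive (\<lambda>p c. sc c (fst p * snd p))"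
  by (simp add: coeff_additive_def scale_left_distrib)

lemma tensor_compatible_mult: "tensor_compatible sc (\<lambda>p c. sc c (fst p * snd p))"
  by (rule tensor_compatibleI[OF coeff_additive_mult])
     (simp_all add: distrib_left distrib_right scale_right_distrib scale_mult_left[symmetric]
       scale_mult_right[symmetric])

lemma tmult_tensor_eq: "tensor_eq sc F F' \<Longrightarrow> fin_supp F \<Longrightarrow> fin_supp F' \<Longrightarrow> tmult sc F = tmult sc F'"
  unfolding tmult_eq_lin_ext by (rule lin_ext_tensor_eq[OF tensor_compatible_mult])

lemma tmult_tlmul: "fin_supp F \<Longrightarrow> tmult sc (tlmul a F) = a * tmult sc F"
  unfolding tmult_eq_lin_ext tlmul_eq_pushforward lin_ext_pushforward[OF _ coeff_additive_mult]
  by (simp add: lin_ext_def sum_distrib_left scale_mult_right mult.assoc)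

lemma tmult_trmul: "fin_supp F \<Longrightarrow> tmult sc (trmul F b) = tmult sc F * b"
  unfolding tmult_eq_lin_ext trmul_eq_pushforward lin_ext_pushforward[OF _ coeff_additive_mult]
  by (simp add: lin_ext_def sum_distrib_right scale_mult_left mult.assoc)

lemma tmult_add: "fin_supp F \<Longrightarrow> fin_supp F' \<Longrightarrow> tmult sc (\<lambda>p. F p + F' p) = tmult sc F + tmult sc F'"
  unfolding tmult_eq_lin_ext by (rule lin_ext_add[OF _ _ coeff_additive_mult])

lemma tmult_diff: "fin_supp F \<Longrightarrow> fin_supp F' \<Longrightarrow> tmult sc (\<lambda>p. F p - F' p) = tmult sc F - tmult sc F'"
  unfolding tmult_eq_lin_ext by (rule lin_ext_diff[OF _ _ coeff_additive_mult])

lemma tmult_uminus: "fin_supp F \<Longrightarrow> tmult sc (\<lambda>p. - F p) = - tmult sc F"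
  unfolding tmult_eq_lin_ext by (rule lin_ext_uminus[OF _ coeff_additive_mult])

lemma tmult_tpure: "tmult sc (tpure x y) = x * y"
  unfolding tmult_eq_lin_ext by (simp add: lin_ext_tpure[OF coeff_additive_mult])

end

section \<open>Separability idempotents and normalized nearly Frobenius coproducts\<close>

definition separability_idempotent ::
    "('k::field \<Rightarrow> 'a::{ring,monoid_mult} \<Rightarrow> 'a) \<Rightarrow> ('a \<times> 'a \<Rightarrow> 'k) \<Rightarrow> bool" where
  "separability_idempotent sc e \<longleftrightarrow>
     fin_supp e \<and> (\<forall>a. tensor_eq sc (trmul e a) (tlmul a e)) \<and> tmult sc e = 1"

lemma separability_idempotent_coproduct_one:
  assumes "nearly_frobenius sc \<Delta>" and "normalized sc \<Delta>"
  shows "separability_idempotent sc (\<Delta> 1)"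
  unfolding separability_idempotent_def
proof (intro conjI allI)
  show "fin_supp (\<Delta> 1)" "tmult sc (\<Delta> 1) = 1"
    using assms by (simp_all add: nearly_frobenius_def normalized_def)
next
  fix a
  have "tensor_eq sc (\<Delta> a) (trmul (\<Delta> 1) a)" "tensor_eq sc (\<Delta> a) (tlmul a (\<Delta> 1))"
    using assms(1) unfolding nearly_frobenius_def by (metis mult_1_left mult_1_right)+
  then show "tensor_eq sc (trmul (\<Delta> 1) a) (tlmul a (\<Delta> 1))"
    by (rule tensor_eq_trans[OF tensor_eq_sym])
qed

context field_algebra
begin

lemma nearly_frobenius_tlmul:
  assumes "separability_idempotent sc e"
  shows "nearly_frobenius sc (\<lambda>a. tlmul a e)"
proof -
  have e: "fin_supp e" and central: "\<And>a. tensor_eq sc (tlmul a e) (trmul e a)"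
    using assms by (simp_all add: separability_idempotent_def tensor_eq_sym)
  have "tensor_eq sc (tlmul (sc c a + b) e) (\<lambda>p. c * tlmul a e p + tlmul b e p)" for c a b
  proof -
    have "tensor_eq sc (tlmul (sc c a) e) (\<lambda>q. c * tlmul a e q)"
      using tensor_eq_tlmul_scalar[OF fin_supp_tlmul[OF e], of c a]
      by (simp add: tlmul_tlmul[OF e] scale_eq_mult_left[symmetric])
    then have "tensor_eq sc (\<lambda>q. tlmul (sc c a) e q + tlmul b e q) (\<lambda>q. c * tlmul a e q + tlmul b e q)"
      by (rule tensor_eq_add[OF _ tensor_eq_refl])
    with tensor_eq_tlmul_add[OF e] show ?thesis
      by (rule tensor_eq_trans)
  qed
  moreover have "tensor_eq sc (tlmul (a * b) e) (trmul (tlmul a e) b)" for a b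
    using tensor_eq_tlmul[OF central fin_supp_tlmul[OF e] fin_supp_trmul[OF e], of a b]
    by (simp add: tlmul_tlmul[OF e] tlmul_trmul[OF e])
  moreover have "tensor_eq sc (tlmul (a * b) e) (tlmul a (tlmul b e))" for a b
    by (simp add: tlmul_tlmul[OF e] tensor_eq_refl)
  ultimately show ?thesis
    unfolding nearly_frobenius_def by (simp add: fin_supp_tlmul[OF e])
qed

lemma normalized_tlmul: "separability_idempotent sc e \<Longrightarrow> normalized sc (\<lambda>a. tlmul a e)"
  by (simp add: separability_idempotent_def normalized_def tmult_tlmul)

end

section \<open>Vanishing of Hochschild cohomology\<close>

definition merge_at :: "nat \<Rightarrow> 'a::times list \<Rightarrow> 'a list" where
  "merge_at i xs = take i xs @ [xs ! i * xs ! Suc i] @ drop (Suc (Suc i)) xs"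

lemma merge_at_0_Cons [simp]: "merge_at 0 (y # a # as) = (y * a) # as"
  by (simp add: merge_at_def)

lemma merge_at_Suc_Cons [simp]: "merge_at (Suc j) (y # xs) = y # merge_at j xs"
  by (simp add: merge_at_def)

lemma length_merge_at: "Suc i < length xs \<Longrightarrow> length (merge_at i xs) = length xs - 1"
  by (simp add: merge_at_def)

lemma alt_sign_0 [simp]: "alt_sign 0 x = x"
  by (simp add: alt_sign_def)

lemma alt_sign_Suc: "alt_sign (Suc i) x = - alt_sign i x"
  by (simp add: alt_sign_def)

lemma hoch_d_merge_at:
  "hoch_d L R n f xs = L (xs ! 0) (f (tl xs)) + (\<Sum>i<n. alt_sign (Suc i) (f (merge_at i xs)))
     + alt_sign (Suc n) (R (f (butlast xs)) (last xs))"
  by (simp add: hoch_d_def merge_at_def)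

lemma hoch_d_Cons:
  "hoch_d L R (Suc k) f (y # a # as) = L y (f (a # as)) - f ((y * a) # as)
     - (\<Sum>j<k. alt_sign (Suc j) (f (y # merge_at j (a # as))))
     - alt_sign (Suc k) (R (f (y # butlast (a # as))) (last (a # as)))"
  unfolding hoch_d_merge_at sum.lessThan_Suc_shift
  by (simp only: alt_sign_Suc[of "Suc _"] alt_sign_Suc[of 0] alt_sign_0 sum_negf diff_conv_add_uminus
      nth_Cons_0 list.sel merge_at_0_Cons merge_at_Suc_Cons butlast.simps last.simps list.distinct
      if_False add.assoc)

locale bimod = field_algebra sc for sc :: "'k::field \<Rightarrow> 'a::{ring,monoid_mult} \<Rightarrow> 'a" +
  fixes S :: "'m::ab_group_add set" and L :: "'a \<Rightarrow> 'm \<Rightarrow> 'm" and R :: "'m \<Rightarrow> 'a \<Rightarrow> 'm"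
  assumes bimodule: "bimodule sc S L R"
begin

lemma zero_mem: "0 \<in> S"
  using bimodule by (simp add: bimodule_def)

lemma add_mem: "x \<in> S \<Longrightarrow> y \<in> S \<Longrightarrow> x + y \<in> S"
  using bimodule by (simp add: bimodule_def)

lemma uminus_mem: "x \<in> S \<Longrightarrow> - x \<in> S"
  using bimodule by (simp add: bimodule_def)

lemma L_mem: "x \<in> S \<Longrightarrow> L a x \<in> S"
  using bimodule by (simp add: bimodule_def)

lemma R_mem: "x \<in> S \<Longrightarrow> R x a \<in> S"
  using bimodule by (simp add: bimodule_def)

lemma L_mult: "x \<in> S \<Longrightarrow> L (a * b) x = L a (L b x)"
  using bimodule unfolding bimodule_def by blast

lemma L_add_left: "x \<in> S \<Longrightarrow> L (a + b) x = L a x + L b x"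
  using bimodule unfolding bimodule_def by blast

lemma L_R_assoc: "x \<in> S \<Longrightarrow> L a (R x b) = R (L a x) b"
  using bimodule unfolding bimodule_def by blast

lemma L_one: "x \<in> S \<Longrightarrow> L 1 x = x"
  using bimodule unfolding bimodule_def by blast

lemma L_add_right: "x \<in> S \<Longrightarrow> y \<in> S \<Longrightarrow> L a (x + y) = L a x + L a y"
  using bimodule unfolding bimodule_def by blast

lemma R_add_left: "x \<in> S \<Longrightarrow> y \<in> S \<Longrightarrow> R (x + y) a = R x a + R y a"
  using bimodule unfolding bimodule_def by blast

lemma diff_mem: "x \<in> S \<Longrightarrow> y \<in> S \<Longrightarrow> x - y \<in> S"
  unfolding diff_conv_add_uminus by (intro add_mem uminus_mem)

lemma sum_mem: "(\<And>i. i \<in> I \<Longrightarrow> f i \<in> S) \<Longrightarrow> (\<Sum>i\<in>I. f i) \<in> S"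
  by (induction I rule: infinite_finite_induct) (auto simp: zero_mem add_mem)

lemma alt_sign_mem: "x \<in> S \<Longrightarrow> alt_sign i x \<in> S"
  by (simp add: alt_sign_def uminus_mem)

lemma L_zero_right: "L a 0 = 0"
  using L_add_right[OF zero_mem zero_mem, of a] by simp

lemma L_uminus_right: "x \<in> S \<Longrightarrow> L a (- x) = - L a x"
  using L_add_right[of x "- x" a] by (simp add: uminus_mem L_zero_right eq_neg_iff_add_eq_0 add.commute)

lemma L_sum_right: "(\<And>i. i \<in> I \<Longrightarrow> f i \<in> S) \<Longrightarrow> L a (\<Sum>i\<in>I. f i) = (\<Sum>i\<in>I. L a (f i))"
  by (induction I rule: infinite_finite_induct) (auto simp: L_zero_right L_add_right sum_mem)

lemma L_zero_left: "x \<in> S \<Longrightarrow> L 0 x = 0"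
  using L_add_left[of x 0 0] by simp

lemma L_sum_left: "x \<in> S \<Longrightarrow> L (\<Sum>i\<in>I. a i) x = (\<Sum>i\<in>I. L (a i) x)"
  by (induction I rule: infinite_finite_induct) (auto simp: L_add_left L_zero_left)

lemma R_zero_left: "R 0 a = 0"
  using R_add_left[OF zero_mem zero_mem, of a] by simp

lemma R_sum_left: "(\<And>i. i \<in> I \<Longrightarrow> f i \<in> S) \<Longrightarrow> R (\<Sum>i\<in>I. f i) a = (\<Sum>i\<in>I. R (f i) a)"
  by (induction I rule: infinite_finite_induct) (auto simp: R_zero_left R_add_left sum_mem)

lemma L_scalar_commute:
  assumes "x \<in> S"
  shows "L (sc c y) (L (sc d 1) x) = L (sc d 1) (L (sc c y) x)"
proof -
  have "sc c y * sc d 1 = sc d 1 * sc c y"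
    by (simp flip: scale_eq_mult_left scale_eq_mult_right)
  then show ?thesis
    by (simp add: L_mult[OF assms, symmetric])
qed

definition S_linear :: "('a \<Rightarrow> 'm) \<Rightarrow> bool" where
  "S_linear h \<longleftrightarrow> (\<forall>y. h y \<in> S) \<and> (\<forall>c y y'. h (sc c y + y') = L (sc c 1) (h y) + h y')"

lemma S_linear_zero:
  assumes "S_linear h"
  shows "h 0 = 0"
proof -
  have "h (sc 1 0 + 0) = L (sc 1 1) (h 0) + h 0" "h 0 \<in> S"
    using assms unfolding S_linear_def by blast+
  then show ?thesis by (simp add: L_one)
qed

lemma S_linear_add:
  assumes "S_linear h"
  shows "h (y + y') = h y + h y'"
proof -
  have "h (sc 1 y + y') = L (sc 1 1) (h y) + h y'" "h y \<in> S"
    using assms unfolding S_linear_def by blast+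
  then show ?thesis by (simp add: L_one)
qed

lemma S_linear_scale:
  assumes "S_linear h"
  shows "h (sc c y) = L (sc c 1) (h y)"
proof -
  have "h (sc c y + 0) = L (sc c 1) (h y) + h 0"
    using assms unfolding S_linear_def by blast
  then show ?thesis by (simp add: S_linear_zero[OF assms])
qed

lemma hoch_cochain_mem: "hoch_cochain sc S L n f \<Longrightarrow> length xs = n \<Longrightarrow> f xs \<in> S"
  by (simp add: hoch_cochain_def)

lemma hoch_cochain_S_linear_Cons:
  assumes f: "hoch_cochain sc S L (Suc k) f" and rest: "length rest = k"
  shows "S_linear (\<lambda>y. f (y # rest))"
  unfolding S_linear_def
proof (intro conjI allI)
  fix y show "f (y # rest) \<in> S" using hoch_cochain_mem[OF f] rest by simp
next
  fix c y y'
  show "f ((sc c y + y') # rest) = L (sc c 1) (f (y # rest)) + f (y' # rest)"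
    using f rest unfolding hoch_cochain_def
    by (metis length_Cons list_update_code(2) zero_less_Suc)
qed

end

locale separable_bimod = bimod sc S L R
  for sc :: "'k::field \<Rightarrow> 'a::{ring,monoid_mult} \<Rightarrow> 'a" and S :: "'m::ab_group_add set" and L R +
  fixes e :: "'a \<times> 'a \<Rightarrow> 'k"
  assumes separability_idempotent: "separability_idempotent sc e"
begin

lemma fin_supp_e: "fin_supp e"
  using separability_idempotent by (simp add: separability_idempotent_def)

lemma central: "tensor_eq sc (trmul e a) (tlmul a e)"
  using separability_idempotent by (simp add: separability_idempotent_def)

lemma tmult_e: "tmult sc e = 1"
  using separability_idempotent by (simp add: separability_idempotent_def)

definition contract :: "('a \<Rightarrow> 'm) \<Rightarrow> 'm" where
  "contract h = (\<Sum>p\<in>{p. e p \<noteq> 0}. L (sc (e p) (fst p)) (h (snd p)))"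

lemma contract_mem: "(\<And>y. h y \<in> S) \<Longrightarrow> contract h \<in> S"
  unfolding contract_def by (intro sum_mem L_mem)

lemma contract_zero: "contract (\<lambda>_. 0) = 0"
  by (simp add: contract_def L_zero_right)

lemma contract_add:
  "(\<And>y. h y \<in> S) \<Longrightarrow> (\<And>y. h' y \<in> S) \<Longrightarrow> contract (\<lambda>y. h y + h' y) = contract h + contract h'"
  by (simp add: contract_def L_add_right sum.distrib)

lemma contract_uminus: "(\<And>y. h y \<in> S) \<Longrightarrow> contract (\<lambda>y. - h y) = - contract h"
  by (simp add: contract_def L_uminus_right sum_negf)

lemma contract_diff:
  "(\<And>y. h y \<in> S) \<Longrightarrow> (\<And>y. h' y \<in> S) \<Longrightarrow> contract (\<lambda>y. h y - h' y) = contract h - contract h'"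
  using contract_add[of h "\<lambda>y. - h' y"] by (simp add: uminus_mem contract_uminus)

lemma contract_alt_sign: "(\<And>y. h y \<in> S) \<Longrightarrow> contract (\<lambda>y. alt_sign i (h y)) = alt_sign i (contract h)"
  by (simp add: alt_sign_def contract_uminus)

lemma contract_sum:
  "(\<And>j y. j \<in> J \<Longrightarrow> h j y \<in> S) \<Longrightarrow> contract (\<lambda>y. \<Sum>j\<in>J. h j y) = (\<Sum>j\<in>J. contract (h j))"
  unfolding contract_def by (subst L_sum_right) (auto intro: sum.swap)

lemma contract_R: "(\<And>y. h y \<in> S) \<Longrightarrow> contract (\<lambda>y. R (h y) b) = R (contract h) b"
  unfolding contract_def by (subst R_sum_left) (auto intro!: L_mem sum.cong simp: L_R_assoc)

lemma contract_L_scalar: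
  "(\<And>y. h y \<in> S) \<Longrightarrow> contract (\<lambda>y. L (sc c 1) (h y)) = L (sc c 1) (contract h)"
  unfolding contract_def by (subst L_sum_right) (auto intro!: L_mem sum.cong simp: L_scalar_commute)

lemma contract_L:
  assumes m: "m \<in> S"
  shows "contract (\<lambda>y. L y m) = m"
proof -
  have "contract (\<lambda>y. L y m) = (\<Sum>p\<in>{p. e p \<noteq> 0}. L (sc (e p) (fst p * snd p)) m)"
    unfolding contract_def by (rule sum.cong) (simp_all add: L_mult[OF m] scale_mult_left)
  also have "\<dots> = L (tmult sc e) m"
    by (simp add: tmult_def L_sum_left[OF m])
  finally show ?thesis by (simp add: tmult_e L_one m)
qed

lemma contract_mult_right:
  assumes h: "S_linear h"
  shows "contract (\<lambda>y. h (y * a)) = L a (contract h)"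
proof -
  have mem: "\<And>y. h y \<in> S" using h by (simp add: S_linear_def)
  define G where "G = (\<lambda>(q::'a \<times> 'a) (c::'k). L (sc c (fst q)) (h (snd q)))"
  have G_additive: "coeff_additive G"
    unfolding coeff_additive_def G_def by (simp add: scale_left_distrib L_add_left mem)
  have "tensor_compatible sc G"
  proof (rule tensor_compatibleI[OF G_additive])
    fix x y c d
    show "G (x, sc d y) c = G (x, y) (c * d)"
      unfolding G_def
      by (simp add: S_linear_scale[OF h] L_mult[OF mem, symmetric] scale_eq_mult_right[symmetric]
          mult.commute)
  qed (simp_all add: G_def scale_right_distrib L_add_left S_linear_add[OF h] L_add_right mem)
  then have "lin_ext G (trmul e a) = lin_ext G (tlmul a e)"
    by (rule lin_ext_tensor_eq[OF _ central fin_supp_trmul[OF fin_supp_e] fin_supp_tlmul[OF fin_supp_e]])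
  moreover have "lin_ext G (trmul e a) = contract (\<lambda>y. h (y * a))"
    unfolding trmul_eq_pushforward lin_ext_pushforward[OF fin_supp_e G_additive]
    by (simp add: G_def contract_def)
  moreover have "lin_ext G (tlmul a e) = L a (contract h)"
    unfolding tlmul_eq_pushforward lin_ext_pushforward[OF fin_supp_e G_additive] contract_def
    by (subst L_sum_right) (auto intro!: L_mem mem sum.cong simp: G_def scale_mult_right L_mult[OF mem])
  ultimately show ?thesis by simp
qed

lemma hoch_cochain_contract:
  assumes f: "hoch_cochain sc S L (Suc k) f"
  shows "hoch_cochain sc S L k (\<lambda>rest. contract (\<lambda>y. f (y # rest)))"
  unfolding hoch_cochain_def
proof (intro conjI allI impI)
  fix xs :: "'a list" assume "length xs = k"
  then show "contract (\<lambda>y. f (y # xs)) \<in> S"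
    by (intro contract_mem hoch_cochain_mem[OF f]) simp
next
  fix xs :: "'a list" and i c x y
  assume len: "length xs = k" and i: "i < k"
  have mem: "\<And>z u. f (z # xs[i := u]) \<in> S"
    using len by (intro hoch_cochain_mem[OF f]) simp
  have "f (z # xs[i := sc c x + y]) = L (sc c 1) (f (z # xs[i := x])) + f (z # xs[i := y])" for z
    using f len i unfolding hoch_cochain_def
    by (metis Suc_mono length_Cons list_update_code(3))
  then show "contract (\<lambda>z. f (z # xs[i := sc c x + y]))
      = L (sc c 1) (contract (\<lambda>z. f (z # xs[i := x]))) + contract (\<lambda>z. f (z # xs[i := y]))"
    by (simp add: contract_add contract_L_scalar L_mem mem)
qed

text \<open>Contract the cocycle identity \<open>(d f)(y, x\<^sub>1, \<dots>) = 0\<close> in \<open>y\<close> against \<open>e\<close>.\<close>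

lemma hoch_cocycle_eq_hoch_d_contract:
  assumes f: "hoch_cochain sc S L (Suc k) f"
    and cocycle: "\<forall>xs. length xs = Suc (Suc k) \<longrightarrow> hoch_d L R (Suc k) f xs = 0"
    and len: "length xs = Suc k"
  shows "f xs = hoch_d L R k (\<lambda>rest. contract (\<lambda>y. f (y # rest))) xs"
proof -
  obtain a as where xs: "xs = a # as" and as: "length as = k"
    using len by (cases xs) auto
  define g where "g = (\<lambda>rest. contract (\<lambda>y. f (y # rest)))"
  have mem: "\<And>y ys. length ys = k \<Longrightarrow> f (y # ys) \<in> S"
    by (intro hoch_cochain_mem[OF f]) simp
  have mem_merge: "\<And>j y. j < k \<Longrightarrow> f (y # merge_at j (a # as)) \<in> S"
    using as by (intro mem) (simp add: length_merge_at)
  have mem_butlast: "\<And>y. f (y # butlast (a # as)) \<in> S"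
    using as by (intro mem) (simp only: length_butlast length_Cons diff_Suc_1)
  have mem_sum: "\<And>y. (\<Sum>j<k. alt_sign (Suc j) (f (y # merge_at j (a # as)))) \<in> S"
    by (intro sum_mem alt_sign_mem mem_merge) simp
  have contract_merges: "contract (\<lambda>y. \<Sum>j<k. alt_sign (Suc j) (f (y # merge_at j (a # as))))
      = (\<Sum>j<k. alt_sign (Suc j) (g (merge_at j (a # as))))"
    unfolding g_def by (subst contract_sum) (auto simp: contract_alt_sign alt_sign_mem mem_merge)
  have "0 = contract (\<lambda>y. hoch_d L R (Suc k) f (y # a # as))"
    using cocycle as by (simp add: contract_zero)
  also have "\<dots> = contract (\<lambda>y. L y (f (a # as))) - contract (\<lambda>y. f ((y * a) # as))
      - (\<Sum>j<k. alt_sign (Suc j) (g (merge_at j (a # as))))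
      - alt_sign (Suc k) (R (g (butlast (a # as))) (last (a # as)))"
    unfolding hoch_d_Cons
    by (simp add: g_def contract_diff contract_merges contract_alt_sign contract_R mem as mem_butlast
        mem_sum L_mem R_mem diff_mem alt_sign_mem del: butlast.simps last.simps)
  also have "\<dots> = f xs - hoch_d L R k g xs"
    unfolding xs hoch_d_merge_at
    by (simp add: contract_L mem as contract_mult_right[OF hoch_cochain_S_linear_Cons[OF f as]] g_def)
  finally show ?thesis
    by (simp add: g_def)
qed

end

lemma hoch_vanish_of_separability_idempotent:
  assumes "k_algebra sc" "bimodule sc S L R" "separability_idempotent sc e" and "n \<ge> 1"
  shows "hoch_vanish sc S L R n"
proof -
  interpret separable_bimod sc S L R e
    using assms(1-3) by unfold_locales
  obtain k where n: "n = Suc k" using assms(4) by (cases n) auto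
  show ?thesis
    unfolding hoch_vanish_def n diff_Suc_1
  proof (intro allI impI)
    fix f assume "hoch_cochain sc S L (Suc k) f \<and> (\<forall>xs. length xs = Suc (Suc k) \<longrightarrow> hoch_d L R (Suc k) f xs = 0)"
    then show "\<exists>g. hoch_cochain sc S L k g \<and> (\<forall>xs. length xs = Suc k \<longrightarrow> f xs = hoch_d L R k g xs)"
      using hoch_cochain_contract hoch_cocycle_eq_hoch_d_contract by blast
  qed
qed

section \<open>The bimodule \<open>ker m\<close> and the universal derivation\<close>

locale algebra_with_basis = field_algebra sc for sc :: "'k::field \<Rightarrow> 'a::{ring,monoid_mult} \<Rightarrow> 'a" +
  fixes B :: "'a set"
  assumes independent_B: "independent B" and span_B: "span B = UNIV"
begin

definition coord :: "'a \<Rightarrow> 'a \<Rightarrow> 'k" where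
  "coord x = representation B x"

lemma coord_add: "coord (x + y) b = coord x b + coord y b"
  unfolding coord_def using representation_add[OF independent_B] span_B by simp

lemma coord_scale: "coord (sc c x) b = c * coord x b"
  unfolding coord_def using representation_scale[OF independent_B] span_B by simp

lemma finite_coord: "finite {b. coord x b \<noteq> 0}"
  unfolding coord_def by (rule finite_representation)

lemma sum_coord: "(\<Sum>b\<in>{b. coord x b \<noteq> 0}. sc (coord x b) b) = x"
  unfolding coord_def using sum_nonzero_representation_eq[OF independent_B] span_B by simp

text \<open>A bimodule structure needs a set of representatives on which \<open>tensor_eq\<close> is equality:
  \<open>canon F\<close> maps \<open>(b, b')\<close> to the coordinate of \<open>F\<close> at \<open>b \<otimes> b'\<close> in the basis \<open>B \<otimes> B\<close>.\<close>

definition canon_coeff :: "'a \<times> 'a \<Rightarrow> 'a \<times> 'a \<Rightarrow> 'k \<Rightarrow> 'k" where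
  "canon_coeff q p c = c * (coord (fst p) (fst q) * coord (snd p) (snd q))"

definition canon :: "('a \<times> 'a \<Rightarrow> 'k) \<Rightarrow> 'a \<times> 'a \<Rightarrow> 'k" where
  "canon F = (\<lambda>q. lin_ext (canon_coeff q) F)"

lemma coeff_additive_canon_coeff: "coeff_additive (canon_coeff q)"
  by (simp add: coeff_additive_def canon_coeff_def distrib_right)

lemma tensor_compatible_canon_coeff: "tensor_compatible sc (canon_coeff q)"
  by (rule tensor_compatibleI[OF coeff_additive_canon_coeff])
     (simp_all add: canon_coeff_def coord_add coord_scale algebra_simps)

lemma canon_tensor_eq: "tensor_eq sc F F' \<Longrightarrow> fin_supp F \<Longrightarrow> fin_supp F' \<Longrightarrow> canon F = canon F'"
  unfolding canon_def by (rule ext, rule lin_ext_tensor_eq[OF tensor_compatible_canon_coeff])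

lemma canon_add: "fin_supp F \<Longrightarrow> fin_supp F' \<Longrightarrow> canon (\<lambda>p. F p + F' p) = (\<lambda>q. canon F q + canon F' q)"
  unfolding canon_def by (simp add: lin_ext_add coeff_additive_canon_coeff)

lemma canon_diff: "fin_supp F \<Longrightarrow> fin_supp F' \<Longrightarrow> canon (\<lambda>p. F p - F' p) = (\<lambda>q. canon F q - canon F' q)"
  unfolding canon_def by (simp add: lin_ext_diff coeff_additive_canon_coeff)

lemma canon_uminus: "fin_supp F \<Longrightarrow> canon (\<lambda>p. - F p) = (\<lambda>q. - canon F q)"
  unfolding canon_def by (simp add: lin_ext_uminus coeff_additive_canon_coeff)

lemma canon_scale: "canon (\<lambda>p. c * F p) = (\<lambda>q. c * canon F q)"
  unfolding canon_def by (rule ext, rule lin_ext_scale) (simp add: canon_coeff_def)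

lemma canon_zero: "canon (\<lambda>_. 0) = (\<lambda>_. 0)"
  unfolding canon_def by (simp add: lin_ext_zero)

lemma canon_tpure: "canon (tpure x y) = (\<lambda>q. coord x (fst q) * coord y (snd q))"
  unfolding canon_def by (simp add: lin_ext_tpure[OF coeff_additive_canon_coeff] canon_coeff_def)

lemma fin_supp_canon:
  assumes F: "fin_supp F"
  shows "fin_supp (canon F)"
proof -
  let ?T = "\<Union>p\<in>{p. F p \<noteq> 0}. {b. coord (fst p) b \<noteq> 0} \<times> {b. coord (snd p) b \<noteq> 0}"
  have "{q. canon F q \<noteq> 0} \<subseteq> ?T"
  proof
    fix q assume "q \<in> {q. canon F q \<noteq> 0}"
    then have "(\<Sum>p\<in>{p. F p \<noteq> 0}. canon_coeff q p (F p)) \<noteq> 0"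
      by (simp add: canon_def lin_ext_def)
    then obtain p where "p \<in> {p. F p \<noteq> 0}" "canon_coeff q p (F p) \<noteq> 0"
      by (rule sum.not_neutral_contains_not_neutral)
    then show "q \<in> ?T" by (cases q, cases p) (auto simp: canon_coeff_def)
  qed
  moreover have "finite ?T"
    using F by (auto simp: fin_supp_def finite_coord)
  ultimately show ?thesis
    unfolding fin_supp_def by (rule finite_subset)
qed

lemma tensor_eq_tpure_canon: "tensor_eq sc (tpure x y) (canon (tpure x y))"
proof -
  let ?Bx = "{b. coord x b \<noteq> 0}" and ?By = "{b. coord y b \<noteq> 0}"
  have "tensor_eq sc (tpure x y) (\<lambda>q. \<Sum>b\<in>?Bx. coord x b * tpure b y q)"
    using tensor_eq_tpure_sum_left[OF finite_coord[of x], where sc = sc and c = "coord x" and y = y] by (simp add: sum_coord)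
  also have "tensor_eq sc \<dots> (\<lambda>q. \<Sum>b\<in>?Bx. coord x b * (\<Sum>b'\<in>?By. coord y b' * tpure b b' q))"
  proof (intro tensor_eq_sum tensor_eq_scale finite_coord)
    fix b
    show "tensor_eq sc (tpure b y) (\<lambda>q. \<Sum>b'\<in>?By. coord y b' * tpure b b' q)"
      using tensor_eq_tpure_sum_right[OF finite_coord[of y], where sc = sc and x = b and c = "coord y"] by (simp add: sum_coord)
  qed
  also have "(\<lambda>q. \<Sum>b\<in>?Bx. coord x b * (\<Sum>b'\<in>?By. coord y b' * tpure b b' q)) = canon (tpure x y)"
  proof
    fix q :: "'a \<times> 'a"
    obtain u v where q: "q = (u, v)" by (cases q)
    have "(\<Sum>b\<in>?Bx. coord x b * (\<Sum>b'\<in>?By. coord y b' * tpure b b' q))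
        = (\<Sum>b\<in>?Bx. if b = u then coord x b * (\<Sum>b'\<in>?By. if b' = v then coord y b' else 0) else 0)"
      by (rule sum.cong) (auto simp: q tpure_def intro!: sum.cong)
    also have "\<dots> = coord x u * coord y v"
      using finite_coord[of x] finite_coord[of y] by auto
    finally show "(\<Sum>b\<in>?Bx. coord x b * (\<Sum>b'\<in>?By. coord y b' * tpure b b' q)) = canon (tpure x y) q"
      by (simp add: canon_tpure q)
  qed
  finally show ?thesis .
qed

lemma tensor_eq_canon:
  assumes F: "fin_supp F"
  shows "tensor_eq sc F (canon F)"
proof -
  let ?P = "{p. F p \<noteq> 0}"
  have "tensor_eq sc (\<lambda>q. \<Sum>p\<in>?P. F p * tpure (fst p) (snd p) q)
      (\<lambda>q. \<Sum>p\<in>?P. F p * canon (tpure (fst p) (snd p)) q)"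
    using F by (intro tensor_eq_lincomb tensor_eq_tpure_canon) (simp add: fin_supp_def)
  moreover have "canon F = (\<lambda>q. \<Sum>p\<in>?P. F p * canon (tpure (fst p) (snd p)) q)"
    unfolding canon_tpure by (simp add: canon_def lin_ext_def canon_coeff_def)
  ultimately show ?thesis
    using fin_supp_expand[OF F] by simp
qed

lemma tensor_eq_iff_canon_eq:
  "fin_supp F \<Longrightarrow> fin_supp F' \<Longrightarrow> tensor_eq sc F F' \<longleftrightarrow> canon F = canon F'"
  by (metis canon_tensor_eq tensor_eq_canon tensor_eq_sym tensor_eq_trans)

lemma canon_canon: "fin_supp F \<Longrightarrow> canon (canon F) = canon F"
  by (metis canon_tensor_eq fin_supp_canon tensor_eq_canon tensor_eq_sym)

lemma tmult_canon: "fin_supp F \<Longrightarrow> tmult sc (canon F) = tmult sc F"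
  by (metis fin_supp_canon tensor_eq_canon tmult_tensor_eq tensor_eq_sym)

lemma canon_tlmul_canon: "fin_supp F \<Longrightarrow> canon (tlmul a (canon F)) = canon (tlmul a F)"
  by (intro canon_tensor_eq tensor_eq_tlmul tensor_eq_sym[OF tensor_eq_canon])
     (simp_all add: fin_supp_canon fin_supp_tlmul)

lemma canon_trmul_canon: "fin_supp F \<Longrightarrow> canon (trmul (canon F) a) = canon (trmul F a)"
  by (intro canon_tensor_eq tensor_eq_trmul tensor_eq_sym[OF tensor_eq_canon])
     (simp_all add: fin_supp_canon fin_supp_trmul)

definition Omega :: "('a \<times> 'a \<Rightarrow> 'k) set" where
  "Omega = {\<phi>. fin_supp \<phi> \<and> canon \<phi> = \<phi> \<and> tmult sc \<phi> = 0}"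

definition Omega_L :: "'a \<Rightarrow> ('a \<times> 'a \<Rightarrow> 'k) \<Rightarrow> 'a \<times> 'a \<Rightarrow> 'k" where
  "Omega_L a \<phi> = canon (tlmul a \<phi>)"

definition Omega_R :: "('a \<times> 'a \<Rightarrow> 'k) \<Rightarrow> 'a \<Rightarrow> 'a \<times> 'a \<Rightarrow> 'k" where
  "Omega_R \<phi> a = canon (trmul \<phi> a)"

lemma canon_mem_Omega: "fin_supp F \<Longrightarrow> tmult sc F = 0 \<Longrightarrow> canon F \<in> Omega"
  by (simp add: Omega_def fin_supp_canon canon_canon tmult_canon)

lemma bimodule_Omega: "bimodule sc Omega Omega_L Omega_R"
  unfolding bimodule_def
proof (intro conjI ballI allI)
  show "0 \<in> Omega"
    by (simp add: Omega_def zero_fun_def canon_zero tmult_def)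
next
  fix x y assume "x \<in> Omega" "y \<in> Omega"
  then show "x + y \<in> Omega"
    by (simp add: Omega_def plus_fun_def fin_supp_add canon_add tmult_add)
next
  fix x assume "x \<in> Omega"
  then show "- x \<in> Omega"
    by (simp add: Omega_def fun_Compl_def fin_supp_uminus canon_uminus tmult_uminus)
next
  fix a x assume "x \<in> Omega"
  then have "fin_supp x" "tmult sc x = 0" by (simp_all add: Omega_def)
  then show "Omega_L a x \<in> Omega" "Omega_R x a \<in> Omega"
    unfolding Omega_L_def Omega_R_def
    by (simp_all add: canon_mem_Omega fin_supp_tlmul fin_supp_trmul tmult_tlmul tmult_trmul)
next
  fix a b x assume "x \<in> Omega"
  then have x: "fin_supp x" by (simp add: Omega_def)
  show "Omega_L (a * b) x = Omega_L a (Omega_L b x)"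
    unfolding Omega_L_def by (simp add: tlmul_tlmul x canon_tlmul_canon fin_supp_tlmul)
  show "Omega_R x (a * b) = Omega_R (Omega_R x a) b"
    unfolding Omega_R_def by (simp add: trmul_trmul x canon_trmul_canon fin_supp_trmul)
  show "Omega_L (a + b) x = Omega_L a x + Omega_L b x"
    unfolding Omega_L_def plus_fun_def
    by (subst canon_tensor_eq[OF tensor_eq_tlmul_add[OF x]])
       (simp_all add: fin_supp_tlmul x fin_supp_add canon_add)
  show "Omega_R x (a + b) = Omega_R x a + Omega_R x b"
    unfolding Omega_R_def plus_fun_def
    by (subst canon_tensor_eq[OF tensor_eq_trmul_add[OF x]])
       (simp_all add: fin_supp_trmul x fin_supp_add canon_add)
  show "Omega_L a (Omega_R x b) = Omega_R (Omega_L a x) b"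
    unfolding Omega_L_def Omega_R_def
    by (simp add: canon_tlmul_canon canon_trmul_canon fin_supp_tlmul fin_supp_trmul x tlmul_trmul)
next
  fix x assume "x \<in> Omega"
  then show "Omega_L 1 x = x" "Omega_R x 1 = x"
    by (simp_all add: Omega_def Omega_L_def Omega_R_def tlmul_one trmul_one)
next
  fix a x y assume "x \<in> Omega" "y \<in> Omega"
  then have x: "fin_supp x" and y: "fin_supp y" by (simp_all add: Omega_def)
  show "Omega_L a (x + y) = Omega_L a x + Omega_L a y"
    unfolding Omega_L_def plus_fun_def tlmul_eq_pushforward pushforward_add[OF x y]
    by (simp add: canon_add fin_supp_pushforward x y)
  show "Omega_R (x + y) a = Omega_R x a + Omega_R y a"
    unfolding Omega_R_def plus_fun_def trmul_eq_pushforward pushforward_add[OF x y]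
    by (simp add: canon_add fin_supp_pushforward x y)
next
  fix c x assume "x \<in> Omega"
  then have x: "fin_supp x" by (simp add: Omega_def)
  have "canon (tlmul (sc c 1) x) = canon (\<lambda>q. c * x q)"
    by (rule canon_tensor_eq[OF tensor_eq_tlmul_scalar[OF x]]) (simp_all add: fin_supp_tlmul x fin_supp_scale)
  moreover have "canon (trmul x (sc c 1)) = canon (\<lambda>q. c * x q)"
    by (rule canon_tensor_eq[OF tensor_eq_trmul_scalar[OF x]]) (simp_all add: fin_supp_trmul x fin_supp_scale)
  ultimately show "Omega_L (sc c 1) x = Omega_R x (sc c 1)"
    by (simp add: Omega_L_def Omega_R_def)
qed

definition univ_der :: "'a \<Rightarrow> 'a \<times> 'a \<Rightarrow> 'k" where
  "univ_der a = canon (\<lambda>q. tpure a 1 q - tpure 1 a q)"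

lemma univ_der_eq: "univ_der a = (\<lambda>q. coord a (fst q) * coord 1 (snd q) - coord 1 (fst q) * coord a (snd q))"
  by (simp add: univ_der_def canon_diff fin_supp_tpure canon_tpure)

lemma univ_der_mem: "univ_der a \<in> Omega"
  unfolding univ_der_def
  by (rule canon_mem_Omega) (simp_all add: fin_supp_diff fin_supp_tpure tmult_diff tmult_tpure)

lemma univ_der_linear: "univ_der (sc c x + y) = Omega_L (sc c 1) (univ_der x) + univ_der y"
proof -
  have x: "fin_supp (univ_der x)" and x': "canon (univ_der x) = univ_der x"
    using univ_der_mem[of x] by (simp_all add: Omega_def)
  have "Omega_L (sc c 1) (univ_der x) = canon (\<lambda>q. c * univ_der x q)"
    unfolding Omega_L_def
    by (rule canon_tensor_eq[OF tensor_eq_tlmul_scalar[OF x]]) (simp_all add: fin_supp_tlmul x fin_supp_scale)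
  also have "\<dots> = (\<lambda>q. c * univ_der x q)"
    by (simp add: canon_scale x')
  finally show ?thesis
    by (simp add: univ_der_eq plus_fun_def coord_add coord_scale algebra_simps)
qed

lemma hoch_cochain_univ_der: "hoch_cochain sc Omega Omega_L 1 (\<lambda>xs. univ_der (hd xs))"
  unfolding hoch_cochain_def
  by (auto simp: univ_der_mem univ_der_linear length_Suc_conv)

lemma hoch_cocycle_univ_der:
  assumes "length xs = 2"
  shows "hoch_d Omega_L Omega_R 1 (\<lambda>xs. univ_der (hd xs)) xs = 0"
proof -
  obtain a b where xs: "xs = [a, b]"
    using assms by (auto simp: numeral_2_eq_2 length_Suc_conv)
  have T: "fin_supp (\<lambda>q. tpure x 1 q - tpure 1 x q :: 'k)" for x
    by (intro fin_supp_diff fin_supp_tpure)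
  have "Omega_L a (univ_der b) = canon (\<lambda>q. tpure (a * b) 1 q - tpure a b q)"
    unfolding Omega_L_def univ_der_def canon_tlmul_canon[OF T]
    by (simp add: tlmul_diff fin_supp_tpure tlmul_tpure)
  moreover have "Omega_R (univ_der a) b = canon (\<lambda>q. tpure a b q - tpure 1 (a * b) q)"
    unfolding Omega_R_def univ_der_def canon_trmul_canon[OF T]
    by (simp add: trmul_diff fin_supp_tpure trmul_tpure)
  ultimately show ?thesis
    by (simp add: xs hoch_d_def alt_sign_def univ_der_def canon_diff fin_supp_tpure canon_tpure fun_eq_iff)
qed

lemma separability_idempotent_of_hoch_vanish:
  assumes "hoch_vanish sc Omega Omega_L Omega_R 1"
  shows "\<exists>e. separability_idempotent sc e"
proof -
  obtain g where g: "hoch_cochain sc Omega Omega_L 0 g"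
    and dg: "\<And>xs. length xs = 1 \<Longrightarrow> univ_der (hd xs) = hoch_d Omega_L Omega_R 0 g xs"
    using assms hoch_cochain_univ_der hoch_cocycle_univ_der unfolding hoch_vanish_def by force
  define u where "u = g []"
  have u: "fin_supp u" "tmult sc u = 0"
    using g by (simp_all add: hoch_cochain_def u_def Omega_def)
  define e where "e = (\<lambda>q. tpure 1 1 q - u q)"
  have e: "fin_supp e"
    unfolding e_def by (intro fin_supp_diff fin_supp_tpure u)
  have "tensor_eq sc (tlmul a e) (trmul e a)" for a
  proof -
    have "univ_der a = Omega_L a u - Omega_R u a"
      using dg[of "[a]"] by (simp add: hoch_d_def alt_sign_def u_def)
    then have "canon (\<lambda>q. tpure a 1 q - tpure 1 a q) = canon (\<lambda>q. tlmul a u q - trmul u a q)"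
      by (simp add: univ_der_def Omega_L_def Omega_R_def canon_diff fin_supp_tlmul fin_supp_trmul u
          fun_eq_iff)
    then have "(\<lambda>q. (tpure a 1 q - tpure 1 a q) - (tlmul a u q - trmul u a q)) \<in> tensor_rel sc"
      using tensor_eq_iff_canon_eq[of "\<lambda>q. tpure a 1 q - tpure 1 a q" "\<lambda>q. tlmul a u q - trmul u a q"]
      by (simp add: fin_supp_diff fin_supp_tpure fin_supp_tlmul fin_supp_trmul u tensor_eq_def)
    moreover have "(\<lambda>q. (tpure a 1 q - tpure 1 a q) - (tlmul a u q - trmul u a q))
        = (\<lambda>q. tlmul a e q - trmul e a q)"
      by (simp add: e_def tlmul_diff trmul_diff fin_supp_tpure u tlmul_tpure trmul_tpure fun_eq_iff)
    ultimately show ?thesis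
      by (simp add: tensor_eq_def)
  qed
  moreover have "tmult sc e = 1"
    by (simp add: e_def tmult_diff fin_supp_tpure u tmult_tpure)
  ultimately have "separability_idempotent sc e"
    using e by (simp add: separability_idempotent_def tensor_eq_sym)
  then show ?thesis by blast
qed

end

lemma separability_idempotent_of_hoch_dim0:
  fixes sc :: "'k::field \<Rightarrow> 'a::{ring,monoid_mult} \<Rightarrow> 'a"
  assumes "k_algebra sc" and "hoch_dim0 sc TYPE('a \<times> 'a \<Rightarrow> 'k)"
  shows "\<exists>e :: 'a \<times> 'a \<Rightarrow> 'k. separability_idempotent sc e"
proof -
  interpret field_algebra sc by (fact field_algebra.intro[OF assms(1)])
  obtain B where "independent B" "UNIV \<subseteq> span B"
    using basis_exists[of UNIV] by blast
  then interpret algebra_with_basis sc B by unfold_locales auto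
  show ?thesis
    using assms(2) bimodule_Omega separability_idempotent_of_hoch_vanish
    unfolding hoch_dim0_def by blast
qed

theorem proposition27:
  fixes sc :: "'k::field \<Rightarrow> 'a::{ring,monoid_mult} \<Rightarrow> 'a"
  assumes "k_algebra sc"
  shows "((\<exists>\<Delta>. nearly_frobenius sc \<Delta> \<and> normalized sc \<Delta>) \<longrightarrow> hoch_dim0 sc TYPE('m::ab_group_add))
       \<and> (hoch_dim0 sc TYPE('a \<times> 'a \<Rightarrow> 'k) \<longrightarrow> (\<exists>\<Delta>. nearly_frobenius sc \<Delta> \<and> normalized sc \<Delta>))"
proof (intro conjI impI)
  assume "\<exists>\<Delta>. nearly_frobenius sc \<Delta> \<and> normalized sc \<Delta>"
  then obtain \<Delta> where "nearly_frobenius sc \<Delta>" "normalized sc \<Delta>" by blast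
  then have "separability_idempotent sc (\<Delta> 1)"
    by (rule separability_idempotent_coproduct_one)
  then show "hoch_dim0 sc TYPE('m)"
    unfolding hoch_dim0_def using hoch_vanish_of_separability_idempotent[OF assms] by blast
next
  assume "hoch_dim0 sc TYPE('a \<times> 'a \<Rightarrow> 'k)"
  then obtain e where "separability_idempotent sc e"
    using separability_idempotent_of_hoch_dim0[OF assms] by blast
  then show "\<exists>\<Delta>. nearly_frobenius sc \<Delta> \<and> normalized sc \<Delta>"
    using field_algebra.nearly_frobenius_tlmul field_algebra.normalized_tlmul field_algebra.intro[OF assms]
    by blast
qed

end
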